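(* The function $h$ is a height function, i.e. it satisfies: (A1) $h(L)=0$ if and only if $L=\emptyset$; (A2) if $h(L)<\infty$ and $L'\subseteq L$ then $h(L')\le h(L)$; (A3) if $h(L)<\infty$ and $L'\subseteq L-1$ then $h(L')\le h(L)$; (A4) if $h(L),h(L')\le s<\infty$, then $h(L'\cap L)\le s-1$ or $h(L'\cap(L-1))\le s-1$; for all finite $L,L'\subseteq\mathbb{N}$ and integers $s$.
   Context: $\mathbb{N}=\{0,1,2,\ldots\}$. For a finite $L\subseteq\mathbb{N}$ and an integer $r$, write $L+r:=\{x+r: x\in L,\ x+r\ge 0\}$. Define $h$ on finite subsets of $\mathbb{N}$ recursively on $|L|$: $h(\emptyset)=0$, and for $L\neq\emptyset$, $$h(L)=1+\max\Big\{h(L\cap(L+1)),\ \max_{M\in T(L)}\min\{h(L\cap M),\,h(L\cap(M-1))\}\Big\},$$ where $T(L)$ is the set of all finite $M\subseteq\mathbb{N}$ with $M\notin\{L,L+1\}$ and $0<|M|\le|L|$. *)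

theory Defs
  imports Main
begin

definition shift :: "nat set \<Rightarrow> int \<Rightarrow> nat set" where
  "shift L r = {nat (int x + r) | x. x \<in> L \<and> int x + r \<ge> 0}"

lemma mem_shift: "y \<in> shift L r \<longleftrightarrow> (\<exists>x\<in>L. int x + r \<ge> 0 \<and> y = nat (int x + r))"
  unfolding shift_def by blast

definition Tset :: "nat set \<Rightarrow> nat set set" where
  "Tset L = {M. finite M \<and> M \<noteq> L \<and> M \<noteq> shift L 1 \<and> 0 < card M \<and> card M \<le> card L}"

lemma card_inter_shift1_less:
  assumes "finite L" "L \<noteq> {}"
  shows "card (L \<inter> shift L 1) < card L"
proof -
  have "Min L \<in> L" using assms by simp
  moreover have "Min L \<notin> shift L 1"
  proof
    assume "Min L \<in> shift L 1"
    then obtain x where "x \<in> L" and mx: "Min L = nat (int x + 1)" unfolding mem_shift by blast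
    have "nat (int x + 1) = Suc x" by simp
    with mx have "Min L = Suc x" by (rule trans)
    moreover have "Min L \<le> x" by (rule Min_le[OF assms(1) \<open>x \<in> L\<close>])
    ultimately show False by simp
  qed
  ultimately have "L \<inter> shift L 1 \<noteq> L" by blast
  then have "L \<inter> shift L 1 \<subset> L" by blast
  then show ?thesis by (rule psubset_card_mono[OF assms(1)])
qed

lemma card_inter_T_less:
  assumes "finite L" "M \<in> Tset L"
  shows "card (L \<inter> M) < card L"
proof (rule psubset_card_mono[OF assms(1)])
  show "L \<inter> M \<subset> L"
  proof
    show "L \<inter> M \<subseteq> L" by auto
    show "L \<inter> M \<noteq> L"
    proof
      assume "L \<inter> M = L"
      then have "L \<subseteq> M" by auto
      moreover have "finite M" "card M \<le> card L" "M \<noteq> L" using assms(2) by (auto simp: Tset_def)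
      ultimately have "L = M" using card_seteq[of M L] by simp
      with \<open>M \<noteq> L\<close> show False by simp
    qed
  qed
qed

lemma shift_pm1: "shift (shift L (-1)) 1 \<subseteq> L"
  by (auto simp: shift_def)

lemma card_shift1: "finite L \<Longrightarrow> card (shift L 1) = card L"
proof -
  assume "finite L"
  have e: "\<And>x::nat. nat (int x + 1) = Suc x" by simp
  have "shift L 1 = Suc ` L" unfolding shift_def e by auto
  then show ?thesis by (simp add: card_image)
qed

lemma card_inter_Tm1_less:
  assumes "finite L" "M \<in> Tset L"
  shows "card (L \<inter> shift M (-1)) < card L"
proof (rule psubset_card_mono[OF assms(1)])
  show "L \<inter> shift M (-1) \<subset> L"
  proof
    show "L \<inter> shift M (-1) \<subseteq> L" by auto
    show "L \<inter> shift M (-1) \<noteq> L"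
    proof
      assume "L \<inter> shift M (-1) = L"
      then have "L \<subseteq> shift M (-1)" by auto
      have "shift L 1 \<subseteq> M"
      proof
        fix z assume "z \<in> shift L 1"
        then obtain y where y: "y \<in> L" "z = nat (int y + 1)" unfolding mem_shift by blast
        from y(1) \<open>L \<subseteq> shift M (-1)\<close> have "y \<in> shift M (-1)" by blast
        then obtain x where x: "x \<in> M" "y = nat (int x + -1)" "int x + -1 \<ge> 0"
          unfolding mem_shift by blast
        from x(2,3) y(2) have "z = x" by simp
        with x(1) show "z \<in> M" by simp
      qed
      moreover have "finite M" "card M \<le> card L" "M \<noteq> shift L 1" using assms(2) by (auto simp: Tset_def)
      ultimately have "shift L 1 = M" using card_seteq[of M "shift L 1"] card_shift1[OF assms(1)] by simp
      with \<open>M \<noteq> shift L 1\<close> show False by simp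
    qed
  qed
qed

text \<open>The function h, defined by recursion on |L| (only meaningful on finite L;
  on infinite sets it is set to 0 by convention).\<close>
function hgt :: "nat set \<Rightarrow> nat" where
  "hgt L = (if L = {} \<or> infinite L then 0
            else 1 + max (hgt (L \<inter> shift L 1))
                       (Max ((\<lambda>M. min (hgt (L \<inter> M)) (hgt (L \<inter> shift M (-1)))) ` Tset L)))"
  by auto
termination
proof (relation "measure card")
  show "wf (measure card)" by simp
next
  fix L :: "nat set" assume "\<not> (L = {} \<or> infinite L)"
  then show "(L \<inter> shift L 1, L) \<in> measure card"
    unfolding in_measure by (intro card_inter_shift1_less) auto
next
  fix L M :: "nat set" assume "\<not> (L = {} \<or> infinite L)" "M \<in> Tset L"
  then show "(L \<inter> M, L) \<in> measure card"
    unfolding in_measure by (intro card_inter_T_less) auto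
next
  fix L M :: "nat set" assume "\<not> (L = {} \<or> infinite L)" "M \<in> Tset L"
  then show "(L \<inter> shift M (-1), L) \<in> measure card"
    unfolding in_measure by (intro card_inter_Tm1_less) auto
qed

declare hgt.simps[simp del]

end

theory Submission
  imports Defs
begin

(* We first rewrite the shifts concretely: L + 1 is the image Suc ` L and
   L - 1 is the preimage {x. Suc x \<in> L}.  Writing branch_height L M for the value
   min (h (L \<inter> M)) (h (L \<inter> (M - 1))) of the second branch, the recursion says that
   h L is the least number strictly above h (L \<inter> (L + 1)) and above every
   branch_height L M with M \<in> T(L); this gives a lower-bound lemma for each branch and an
   upper-bound introduction rule.  With these, strong induction on |L| proves
   (A2) monotonicity under inclusion and the translation inequality h K \<le> h (K + 1),
   whose combination gives (A3).  (A4) follows by a case split on how L' relates to L: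
   either L' = L, or L = L' + 1, or L' + 1 \<in> T(L), or L \<in> T(L'); in each case one of the
   two intersections is bounded by a branch of the recursion for L or for L'.  (A1) is
   immediate from the recursion. *)

lemma shift_plus_one: "shift A 1 = Suc ` A"
  unfolding shift_def by force

lemma shift_minus_one: "shift A (-1) = {x. Suc x \<in> A}"
proof (intro set_eqI iffI)
  fix y assume "y \<in> shift A (-1)"
  then obtain x where "x \<in> A" "int x + -1 \<ge> 0" "y = nat (int x + -1)"
    unfolding mem_shift by blast
  then show "y \<in> {x. Suc x \<in> A}" by (simp add: Suc_nat_eq_nat_zadd1)
next
  fix y assume "y \<in> {x. Suc x \<in> A}"
  moreover have "int (Suc y) + -1 \<ge> 0" "y = nat (int (Suc y) + -1)" by simp_all
  ultimately show "y \<in> shift A (-1)" unfolding mem_shift by blast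
qed

definition branch_height :: "nat set \<Rightarrow> nat set \<Rightarrow> nat" where
  "branch_height L M = min (hgt (L \<inter> M)) (hgt (L \<inter> {x. Suc x \<in> M}))"

lemma hgt_empty: "hgt {} = 0"
  by (subst hgt.simps) simp

lemma hgt_unfold:
  assumes "finite L" "L \<noteq> {}"
  shows "hgt L = 1 + max (hgt (L \<inter> Suc ` L)) (Max (branch_height L ` Tset L))"
  using assms by (subst hgt.simps) (simp add: shift_plus_one shift_minus_one branch_height_def)

text \<open>A singleton avoiding L and L + 1 lies in T(L), so the maximum above is over a
  nonempty set.\<close>
lemma Tset_nonempty:
  assumes "finite L" "L \<noteq> {}"
  shows "Tset L \<noteq> {}"
proof -
  have "finite (L \<union> Suc ` L)" using assms(1) by simp
  then obtain b where b: "b \<notin> L \<union> Suc ` L"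
    using ex_new_if_finite[OF infinite_UNIV_nat] by blast
  have "card L > 0" using assms by (simp add: card_gt_0_iff)
  then have "{b} \<in> Tset L" using b unfolding Tset_def shift_plus_one by auto
  then show ?thesis by blast
qed

text \<open>Branch values are heights of subsets of L, so only finitely many occur.\<close>
lemma finite_branch_heights:
  assumes "finite L"
  shows "finite (branch_height L ` Tset L)"
proof (rule finite_subset)
  have "branch_height L M \<in> hgt ` Pow L" for M
    unfolding branch_height_def min_def by (simp add: image_eqI)
  then show "branch_height L ` Tset L \<subseteq> hgt ` Pow L" by blast
  show "finite (hgt ` Pow L)" using assms by simp
qed

lemma hgt_gt_shift_branch:
  assumes "finite L" "L \<noteq> {}"
  shows "hgt (L \<inter> Suc ` L) < hgt L"
  using hgt_unfold[OF assms] by simp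

lemma hgt_gt_branch:
  assumes "finite L" "M \<in> Tset L"
  shows "branch_height L M < hgt L"
proof -
  have "L \<noteq> {}" using assms(2) unfolding Tset_def by auto
  have "branch_height L M \<le> Max (branch_height L ` Tset L)"
    using assms by (intro Max_ge finite_branch_heights) auto
  then show ?thesis using hgt_unfold[OF assms(1) \<open>L \<noteq> {}\<close>] by linarith
qed

lemma hgt_le_if_branches_less:
  assumes "finite L" "hgt (L \<inter> Suc ` L) < k"
    and "\<And>M. M \<in> Tset L \<Longrightarrow> branch_height L M < k"
  shows "hgt L \<le> k"
proof (cases "L = {}")
  case True then show ?thesis by (simp add: hgt_empty)
next
  case False
  have "Max (branch_height L ` Tset L) < k"
    using assms Tset_nonempty[OF assms(1) False] finite_branch_heights[OF assms(1)]
    by (subst Max_less_iff) auto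
  then show ?thesis using hgt_unfold[OF assms(1) False] assms(2) by linarith
qed

lemma hgt_pos: "finite L \<Longrightarrow> L \<noteq> {} \<Longrightarrow> 0 < hgt L"
  using hgt_gt_shift_branch by fastforce

text \<open>(A2): shrinking L shrinks every branch, and T(L') \<subseteq> T(L) for a proper subset L'.\<close>
lemma hgt_mono:
  assumes "finite L" "L' \<subseteq> L"
  shows "hgt L' \<le> hgt L"
  using assms
proof (induction "card L" arbitrary: L L' rule: less_induct)
  case less
  show ?case
  proof (cases "L' = L")
    case False
    then have proper: "L' \<subset> L" using less.prems by blast
    then have "L \<noteq> {}" by blast
    have fin': "finite L'" using less.prems finite_subset by blast
    have card_less: "card L' < card L" using proper less.prems(1) by (simp add: psubset_card_mono)
    show ?thesis
    proof (rule hgt_le_if_branches_less[OF fin'])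
      have "card (L \<inter> Suc ` L) < card L"
        using card_inter_shift1_less[OF less.prems(1) \<open>L \<noteq> {}\<close>] by (simp add: shift_plus_one)
      then have "hgt (L' \<inter> Suc ` L') \<le> hgt (L \<inter> Suc ` L)"
        using less.hyps[of "L \<inter> Suc ` L" "L' \<inter> Suc ` L'"] less.prems by blast
      then show "hgt (L' \<inter> Suc ` L') < hgt L"
        using hgt_gt_shift_branch[OF less.prems(1) \<open>L \<noteq> {}\<close>] by linarith
    next
      fix M assume "M \<in> Tset L'"
      then have M: "M \<in> Tset L"
        using card_less unfolding Tset_def shift_plus_one by (auto simp: card_image)
      have "card (L \<inter> M) < card L" using card_inter_T_less[OF less.prems(1) M] .
      then have "hgt (L' \<inter> M) \<le> hgt (L \<inter> M)"
        using less.hyps[of "L \<inter> M" "L' \<inter> M"] less.prems by blast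
      moreover have "card (L \<inter> {x. Suc x \<in> M}) < card L"
        using card_inter_Tm1_less[OF less.prems(1) M] by (simp add: shift_minus_one)
      then have "hgt (L' \<inter> {x. Suc x \<in> M}) \<le> hgt (L \<inter> {x. Suc x \<in> M})"
        using less.hyps[of "L \<inter> {x. Suc x \<in> M}" "L' \<inter> {x. Suc x \<in> M}"] less.prems by blast
      ultimately have "branch_height L' M \<le> branch_height L M"
        unfolding branch_height_def by linarith
      then show "branch_height L' M < hgt L" using hgt_gt_branch[OF less.prems(1) M] by linarith
    qed
  qed simp
qed

text \<open>Translating by one does not decrease h: Suc maps T(K) into T(K + 1) and commutes
  with all the intersections occurring in the recursion.\<close>
lemma hgt_le_hgt_Suc_image:
  assumes "finite K"
  shows "hgt K \<le> hgt (Suc ` K)"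
  using assms
proof (induction "card K" arbitrary: K rule: less_induct)
  case less
  show ?case
  proof (cases "K = {}")
    case False
    have fin: "finite (Suc ` K)" and nonempty: "Suc ` K \<noteq> {}"
      using less.prems False by simp_all
    show ?thesis
    proof (rule hgt_le_if_branches_less[OF less.prems])
      have "card (K \<inter> Suc ` K) < card K"
        using card_inter_shift1_less[OF less.prems False] by (simp add: shift_plus_one)
      then have "hgt (K \<inter> Suc ` K) \<le> hgt (Suc ` (K \<inter> Suc ` K))"
        using less.hyps less.prems by simp
      also have "Suc ` (K \<inter> Suc ` K) = Suc ` K \<inter> Suc ` (Suc ` K)" by (simp add: image_Int)
      finally show "hgt (K \<inter> Suc ` K) < hgt (Suc ` K)"
        using hgt_gt_shift_branch[OF fin nonempty] by linarith
    next
      fix M assume M: "M \<in> Tset K"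
      have M_Suc: "Suc ` M \<in> Tset (Suc ` K)"
        using M unfolding Tset_def shift_plus_one by (auto simp: card_image inj_image_eq_iff)
      have "card (K \<inter> M) < card K" using card_inter_T_less[OF less.prems M] .
      then have "hgt (K \<inter> M) \<le> hgt (Suc ` (K \<inter> M))" using less.hyps less.prems by simp
      also have "Suc ` (K \<inter> M) = Suc ` K \<inter> Suc ` M" by (simp add: image_Int)
      finally have first: "hgt (K \<inter> M) \<le> hgt (Suc ` K \<inter> Suc ` M)" .
      have "card (K \<inter> {x. Suc x \<in> M}) < card K"
        using card_inter_Tm1_less[OF less.prems M] by (simp add: shift_minus_one)
      then have "hgt (K \<inter> {x. Suc x \<in> M}) \<le> hgt (Suc ` (K \<inter> {x. Suc x \<in> M}))"
        using less.hyps less.prems by simp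
      also have "Suc ` (K \<inter> {x. Suc x \<in> M}) = Suc ` K \<inter> {x. Suc x \<in> Suc ` M}" by auto
      finally have second: "hgt (K \<inter> {x. Suc x \<in> M}) \<le> hgt (Suc ` K \<inter> {x. Suc x \<in> Suc ` M})" .
      have "branch_height K M \<le> branch_height (Suc ` K) (Suc ` M)"
        using first second unfolding branch_height_def by linarith
      then show "branch_height K M < hgt (Suc ` K)"
        using hgt_gt_branch[OF fin M_Suc] by linarith
    qed
  qed (simp add: hgt_empty)
qed

text \<open>(A3) in concrete form: if K + 1 \<subseteq> L, i.e. K \<subseteq> L - 1, then h K \<le> h L.\<close>
lemma hgt_le_if_Suc_image_subset:
  assumes "finite L" "finite K" "Suc ` K \<subseteq> L"
  shows "hgt K \<le> hgt L"
  using hgt_le_hgt_Suc_image[OF assms(2)] hgt_mono[OF assms(1,3)] by linarith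

lemma hgt_intersections:
  assumes fin: "finite L" "finite L'" and nonempty: "L \<noteq> {}" "L' \<noteq> {}"
  shows "min (hgt (L' \<inter> L)) (hgt (L' \<inter> {x. Suc x \<in> L})) < max (hgt L) (hgt L')"
proof -
  consider "L' = L" | "L = Suc ` L'" | "L' \<noteq> L" "L \<noteq> Suc ` L'" "card L' \<le> card L"
    | "L' \<noteq> L" "card L < card L'" by linarith
  then show ?thesis
  proof cases
    case 1
    have "hgt (L \<inter> {x. Suc x \<in> L}) \<le> hgt (L \<inter> Suc ` L)"
      using fin by (intro hgt_le_if_Suc_image_subset) auto
    then show ?thesis using 1 hgt_gt_shift_branch[OF fin(1) nonempty(1)] by simp
  next
    case 2
    then show ?thesis using hgt_gt_shift_branch[OF fin(2) nonempty(2)] by simp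
  next
    case 3
    have "Suc ` L' \<noteq> Suc ` L" using 3 by (auto simp: inj_image_eq_iff)
    then have T: "Suc ` L' \<in> Tset L" using 3 nonempty fin unfolding Tset_def shift_plus_one
      by (auto simp: card_gt_0_iff card_image)
    have "hgt (L' \<inter> {x. Suc x \<in> L}) \<le> hgt (L \<inter> Suc ` L')"
      using fin by (intro hgt_le_if_Suc_image_subset) auto
    moreover have "L \<inter> {x. Suc x \<in> Suc ` L'} = L' \<inter> L" by auto
    then have "min (hgt (L \<inter> Suc ` L')) (hgt (L' \<inter> L)) < hgt L"
      using hgt_gt_branch[OF fin(1) T] unfolding branch_height_def by simp
    ultimately show ?thesis by linarith
  next
    case 4
    have "L \<noteq> Suc ` L'" using 4 by (auto simp: card_image)
    then have "L \<in> Tset L'" using 4 nonempty fin unfolding Tset_def shift_plus_one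
      by (auto simp: card_gt_0_iff)
    then have "branch_height L' L < hgt L'" by (rule hgt_gt_branch[OF fin(2)])
    then show ?thesis unfolding branch_height_def by simp
  qed
qed

theorem proposition13:
  fixes L L' :: "nat set" and s :: int
  assumes "finite L" and "finite L'"
  shows "(hgt L = 0 \<longleftrightarrow> L = {})
       \<and> (L' \<subseteq> L \<longrightarrow> hgt L' \<le> hgt L)
       \<and> (L' \<subseteq> shift L (-1) \<longrightarrow> hgt L' \<le> hgt L)
       \<and> (1 \<le> s \<and> int (hgt L) \<le> s \<and> int (hgt L') \<le> s \<longrightarrow>
            int (hgt (L' \<inter> L)) \<le> s - 1 \<or> int (hgt (L' \<inter> shift L (-1))) \<le> s - 1)"
proof (intro conjI impI)
  show "hgt L = 0 \<longleftrightarrow> L = {}" using hgt_pos[OF assms(1)] hgt_empty by fastforce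
  show "L' \<subseteq> L \<Longrightarrow> hgt L' \<le> hgt L" using hgt_mono[OF assms(1)] by blast
  show "L' \<subseteq> shift L (-1) \<Longrightarrow> hgt L' \<le> hgt L"
    using assms by (intro hgt_le_if_Suc_image_subset) (auto simp: shift_minus_one)
  assume bounds: "1 \<le> s \<and> int (hgt L) \<le> s \<and> int (hgt L') \<le> s"
  show "int (hgt (L' \<inter> L)) \<le> s - 1 \<or> int (hgt (L' \<inter> shift L (-1))) \<le> s - 1"
  proof (cases "L = {} \<or> L' = {}")
    case True
    then show ?thesis using bounds by (auto simp: hgt_empty)
  next
    case False
    then have "min (hgt (L' \<inter> L)) (hgt (L' \<inter> shift L (-1))) < max (hgt L) (hgt L')"
      using hgt_intersections[OF assms] by (simp add: shift_minus_one)
    then show ?thesis using bounds by linarith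
  qed
qed

end
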